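(* Let $k\ge2$, $n>0$, $\lambda>0$ and let $\mathbf{p}$ be a distribution on $[k]$. Let $N\sim\mathbf{Poi}(n)$ and, given $N$, let $x_1,\dots,x_N$ be i.i.d. from $\mathbf{p}$. Each user $i$ outputs, for each $j\in[k]$, the message $(j,\mathbf{1}\{x_i=j\})$ together with $s_{i,j}\sim\mathbf{Poi}(\lambda/N)$ additional messages $(j,b)$ where each $b\sim\mathrm{Bernoulli}(1/2)$, all randomness independent. Let $N_j$ be the total number of messages equal to $(j,1)$, let $\mu=\frac nk+\frac\lambda2$, and let \[ Z=\frac kn\sum_{j=1}^k\big((N_j-\mu)^2-N_j\big). \] Then $\mathbb{E}[Z]=nk\|\mathbf{p}-\mathbf{U}\|_2^2$. In particular, (1) if $\mathbf{p}=\mathbf{U}$ then $\mathbb{E}[Z]=0$, and (2) if $d_{TV}(\mathbf{p},\mathbf{U})>\alpha$ then $\mathbb{E}[Z]>4n\alpha^2$.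
   Context: $\mathbf{U}$ is the uniform distribution on $[k]=\{1,\dots,k\}$, $d_{TV}(\mathbf{p},\mathbf{q})=\frac12\|\mathbf{p}-\mathbf{q}\|_1$, and $\alpha\in(0,1]$. *)

theory Defs
  imports "HOL-Probability.Probability" "HOL-Library.Multiset"
begin

primrec seq_pmf :: "'a pmf list \<Rightarrow> 'a list pmf" where
  "seq_pmf [] = return_pmf []"
| "seq_pmf (P # Ps) = do { x \<leftarrow> P; xs \<leftarrow> seq_pmf Ps; return_pmf (x # xs) }"

definition coord_msgs :: "real \<Rightarrow> nat \<Rightarrow> nat \<Rightarrow> (nat \<times> bool) list pmf" where
  "coord_msgs r x j = do {
     s \<leftarrow> poisson_pmf r;
     bs \<leftarrow> replicate_pmf s (bernoulli_pmf (1/2));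
     return_pmf ((j, x = j) # map (\<lambda>b. (j, b)) bs) }"

definition user_msgs :: "nat \<Rightarrow> real \<Rightarrow> nat \<Rightarrow> (nat \<times> bool) list pmf" where
  "user_msgs k r x = map_pmf concat (seq_pmf (map (coord_msgs r x) [1..<Suc k]))"

text \<open>Convention for N = 0 (where Poi(lambda/N) is undefined): the blanket noise consists,
  for each j, of Poi(lambda) messages (j,b), b ~ Bernoulli(1/2); this is exactly the law of
  the total noise sent for coordinate j when N >= 1.\<close>
definition blanket_msgs :: "nat \<Rightarrow> real \<Rightarrow> (nat \<times> bool) list pmf" where
  "blanket_msgs k lam = map_pmf concat (seq_pmf (map (\<lambda>j. do {
      s \<leftarrow> poisson_pmf lam;
      bs \<leftarrow> replicate_pmf s (bernoulli_pmf (1/2));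
      return_pmf (map (\<lambda>b. (j, b)) bs) }) [1..<Suc k]))"

definition protocol :: "nat \<Rightarrow> real \<Rightarrow> real \<Rightarrow> nat pmf \<Rightarrow> (nat \<times> bool) multiset pmf" where
  "protocol k n lam p = do {
     N \<leftarrow> poisson_pmf n;
     ms \<leftarrow> (if N = 0 then blanket_msgs k lam
            else do {
              xs \<leftarrow> replicate_pmf N p;
              mss \<leftarrow> seq_pmf (map (user_msgs k (lam / real N)) xs);
              return_pmf (concat mss) });
     return_pmf (mset ms) }"

definition msg_count :: "(nat \<times> bool) multiset \<Rightarrow> nat \<Rightarrow> real" where
  "msg_count M j = real (count M (j, True))"

definition stat_Z :: "nat \<Rightarrow> real \<Rightarrow> real \<Rightarrow> (nat \<times> bool) multiset \<Rightarrow> real" where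
  "stat_Z k n lam M =
     (let \<mu> = n / real k + lam / 2 in
      real k / n * (\<Sum>j = 1..k. (msg_count M j - \<mu>)\<^sup>2 - msg_count M j))"

definition unif :: "nat \<Rightarrow> nat pmf" where
  "unif k = pmf_of_set {1..k}"

definition dTV :: "nat \<Rightarrow> nat pmf \<Rightarrow> nat pmf \<Rightarrow> real" where
  "dTV k p q = (1/2) * (\<Sum>j = 1..k. \<bar>pmf p j - pmf q j\<bar>)"

end

theory Submission
  imports Defs
begin

text \<open>Poissonization makes every count N_j Poisson. Given N users, the number of users with
  input j is Binomial(N, p_j); each user sends Poi(lambda/N) noise messages for j, a fair-coin
  thinning of which is Poi(lambda/(2N)), and independent Poisson variables add, so the noise
  messages (j,1) form an independent Poi(lambda/2) variable. Averaging over N ~ Poi(n), the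
  thinning of Poi(n) by p_j is Poi(n p_j), hence N_j ~ Poi(n p_j + lambda/2). For X ~ Poi(m) the
  second factorial moment E[X(X-1)] = m^2 gives E[(X - mu)^2 - X] = (m - mu)^2, so every summand
  of Z has mean (n p_j - n/k)^2. The bound under the TV hypothesis is Cauchy-Schwarz:
  (2 alpha)^2 < (sum_j |p_j - 1/k|)^2 <= k ||p - U||^2.\<close>

lemma pmf_sums_expectation:
  fixes P :: "nat pmf" and f :: "nat \<Rightarrow> real"
  assumes nonneg: "\<And>i. f i \<ge> 0" and sums: "(\<lambda>i. pmf P i * f i) sums s"
  shows "integrable P f" "measure_pmf.expectation P f = s"
proof -
  have int: "integrable (count_space UNIV) (\<lambda>i. pmf P i * f i)"
    unfolding integrable_count_space_nat_iff using sums nonneg by (simp add: sums_iff abs_mult)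
  then show "integrable P f"
    unfolding measure_pmf_eq_density by (subst integrable_density) auto
  have "measure_pmf.expectation P f = (\<integral>i. pmf P i * f i \<partial>count_space UNIV)"
    unfolding measure_pmf_eq_density by (subst integral_density) auto
  also have "\<dots> = s" using int sums by (simp add: integral_count_space_nat sums_iff)
  finally show "measure_pmf.expectation P f = s" .
qed

lemma real_exp_sums: "(\<lambda>i. x ^ i / fact i) sums exp (x :: real)"
  using exp_converges[of x] by (simp add: divide_inverse mult.commute scaleR_conv_of_real)

lemma pmf_poisson_sums_1:
  assumes "m > 0"
  shows "(\<lambda>i. pmf (poisson_pmf m) i) sums 1"
proof -
  have "(\<lambda>i. m ^ i / fact i * exp (-m)) sums (exp m * exp (-m))"
    by (rule sums_mult2[OF real_exp_sums])
  then show ?thesis using assms by (simp add: exp_minus)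
qed

lemma pmf_poisson_Suc:
  assumes "m > 0"
  shows "pmf (poisson_pmf m) (Suc i) * real (Suc i) = m * pmf (poisson_pmf m) i"
  using assms by (simp add: fact_Suc field_simps del: of_nat_Suc)

lemma poisson_mean_sums:
  assumes "m > 0"
  shows "(\<lambda>i. pmf (poisson_pmf m) i * real i) sums m"
proof -
  have "(\<lambda>i. m * pmf (poisson_pmf m) i) sums (m * 1)"
    by (rule sums_mult[OF pmf_poisson_sums_1[OF assms]])
  then have "(\<lambda>i. pmf (poisson_pmf m) (Suc i) * real (Suc i)) sums m"
    by (simp add: pmf_poisson_Suc[OF assms] del: of_nat_Suc pmf_poisson)
  then show ?thesis by (subst (asm) sums_Suc_iff) simp
qed

lemma poisson_factorial_moment_2_sums:
  assumes "m > 0"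
  shows "(\<lambda>i. pmf (poisson_pmf m) i * (real i * (real i - 1))) sums m\<^sup>2"
proof -
  have "(\<lambda>i. m * (pmf (poisson_pmf m) i * real i)) sums (m * m)"
    by (rule sums_mult[OF poisson_mean_sums[OF assms]])
  moreover have "m * (pmf (poisson_pmf m) i * real i)
      = pmf (poisson_pmf m) (Suc i) * (real (Suc i) * (real (Suc i) - 1))" for i
    using pmf_poisson_Suc[OF assms, of i] by (simp only: mult.assoc [symmetric]) simp
  ultimately have "(\<lambda>i. pmf (poisson_pmf m) (Suc i) * (real (Suc i) * (real (Suc i) - 1))) sums m\<^sup>2"
    by (simp add: power2_eq_square)
  then show ?thesis by (subst (asm) sums_Suc_iff) simp
qed

lemma poisson_unbiased_square:
  assumes "m > 0"
  shows "integrable (poisson_pmf m) (\<lambda>i. (real i - \<mu>)\<^sup>2 - real i)"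
    "measure_pmf.expectation (poisson_pmf m) (\<lambda>i. (real i - \<mu>)\<^sup>2 - real i) = (m - \<mu>)\<^sup>2"
proof -
  have nonneg: "real i * (real i - 1) \<ge> 0" for i :: nat by (cases i) auto
  note moment_2 = pmf_sums_expectation[OF nonneg poisson_factorial_moment_2_sums[OF assms]]
  note mean = pmf_sums_expectation[OF _ poisson_mean_sums[OF assms]]
  have eq: "(\<lambda>i. (real i - \<mu>)\<^sup>2 - real i) = (\<lambda>i. real i * (real i - 1) - 2 * \<mu> * real i + \<mu>\<^sup>2)"
    by (auto simp: power2_eq_square algebra_simps)
  show "integrable (poisson_pmf m) (\<lambda>i. (real i - \<mu>)\<^sup>2 - real i)"
    unfolding eq using moment_2 mean by auto
  have "measure_pmf.expectation (poisson_pmf m) (\<lambda>i. real i * (real i - 1) - 2 * \<mu> * real i + \<mu>\<^sup>2)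
      = m\<^sup>2 - 2 * \<mu> * m + \<mu>\<^sup>2"
    using moment_2 mean by (simp add: Bochner_Integration.integral_add Bochner_Integration.integral_diff)
  then show "measure_pmf.expectation (poisson_pmf m) (\<lambda>i. (real i - \<mu>)\<^sup>2 - real i) = (m - \<mu>)\<^sup>2"
    unfolding eq by (simp add: power2_eq_square algebra_simps)
qed

definition conv_pmf :: "nat pmf \<Rightarrow> nat pmf \<Rightarrow> nat pmf" where
  "conv_pmf P Q = bind_pmf P (\<lambda>x. map_pmf (\<lambda>y. x + y) Q)"

primrec conv_list_pmf :: "nat pmf list \<Rightarrow> nat pmf" where
  "conv_list_pmf [] = return_pmf 0"
| "conv_list_pmf (P # Ps) = conv_pmf P (conv_list_pmf Ps)"

lemma conv_pmf_return_0_left [simp]: "conv_pmf (return_pmf 0) Q = Q"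
proof -
  have "(+) (0::nat) = id" by auto
  then show ?thesis by (simp add: conv_pmf_def bind_return_pmf)
qed

lemma conv_pmf_return_0_right [simp]: "conv_pmf P (return_pmf 0) = P"
  by (simp add: conv_pmf_def map_pmf_def bind_return_pmf bind_return_pmf')

lemma conv_pmf_map_left: "conv_pmf (map_pmf f P) Q = bind_pmf P (\<lambda>x. map_pmf (\<lambda>y. f x + y) Q)"
  by (simp add: conv_pmf_def bind_map_pmf)

lemma conv_pmf_shift:
  "conv_pmf (map_pmf (\<lambda>y. a + y) P) (map_pmf (\<lambda>y. b + y) Q) = map_pmf (\<lambda>y. a + b + y) (conv_pmf P Q)"
  unfolding conv_pmf_def map_pmf_def by (simp add: bind_assoc_pmf bind_return_pmf add_ac)

lemma bind_conv_pmf_left: "bind_pmf M (\<lambda>x. conv_pmf (f x) Q) = conv_pmf (bind_pmf M f) Q"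
  unfolding conv_pmf_def by (simp add: bind_assoc_pmf)

lemma map_sum_list_seq_pmf:
  "map_pmf (\<lambda>xs. sum_list (map f xs)) (seq_pmf Ps) = conv_list_pmf (map (map_pmf f) Ps)"
proof (induction Ps)
  case (Cons P Ps)
  have "map_pmf (\<lambda>xs. sum_list (map f xs)) (seq_pmf (P # Ps))
      = bind_pmf P (\<lambda>x. map_pmf (\<lambda>y. f x + y) (map_pmf (\<lambda>xs. sum_list (map f xs)) (seq_pmf Ps)))"
    by (simp add: map_bind_pmf map_pmf_def bind_assoc_pmf bind_return_pmf)
  then show ?case by (simp add: Cons conv_pmf_map_left)
qed simp

lemma conv_list_pmf_single:
  assumes "distinct xs" "x \<in> set xs" "\<And>y. y \<in> set xs \<Longrightarrow> y \<noteq> x \<Longrightarrow> F y = return_pmf 0"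
  shows "conv_list_pmf (map F xs) = F x"
proof -
  have zeros: "conv_list_pmf (map F ys) = return_pmf 0" if "\<And>y. y \<in> set ys \<Longrightarrow> F y = return_pmf 0" for ys
    using that by (induction ys) auto
  show ?thesis
    using assms
  proof (induction xs)
    case (Cons y xs)
    show ?case
    proof (cases "y = x")
      case True
      with Cons.prems have "conv_list_pmf (map F xs) = return_pmf 0" by (intro zeros) auto
      with True show ?thesis by simp
    next
      case False
      with Cons show ?thesis by auto
    qed
  qed simp
qed

lemma conv_list_pmf_shift:
  "conv_list_pmf (map (\<lambda>x. map_pmf (\<lambda>y. g x + y) Q) xs)
     = map_pmf (\<lambda>y. sum_list (map g xs) + y) (conv_list_pmf (replicate (length xs) Q))"
  by (induction xs) (simp_all add: map_pmf_def bind_return_pmf conv_pmf_shift[unfolded map_pmf_def])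

lemma conv_poisson_pmf:
  assumes a: "a > 0" and b: "b > 0"
  shows "conv_pmf (poisson_pmf a) (poisson_pmf b) = poisson_pmf (a + b)"
proof (rule pmf_eqI)
  fix m :: nat
  have shifted: "pmf (map_pmf (\<lambda>y. x + y) (poisson_pmf b)) m = (if x \<le> m then pmf (poisson_pmf b) (m - x) else 0)" for x
  proof (cases "x \<le> m")
    case True
    have "pmf (map_pmf (\<lambda>y. x + y) (poisson_pmf b)) (x + (m - x)) = pmf (poisson_pmf b) (m - x)"
      by (rule pmf_map_inj') (auto simp: inj_on_def)
    with True show ?thesis by simp
  next
    case False
    then have "m \<notin> set_pmf (map_pmf (\<lambda>y. x + y) (poisson_pmf b))" by auto
    with False show ?thesis by (simp add: pmf_eq_0_set_pmf)
  qed
  have "pmf (conv_pmf (poisson_pmf a) (poisson_pmf b)) m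
      = (\<Sum>x\<le>m. pmf (map_pmf (\<lambda>y. x + y) (poisson_pmf b)) m * pmf (poisson_pmf a) x)"
    unfolding conv_pmf_def pmf_bind by (rule integral_measure_pmf_real) (auto simp: shifted split: if_splits)
  also have "\<dots> = (\<Sum>x\<le>m. (b ^ (m - x) / fact (m - x) * exp (-b)) * (a ^ x / fact x * exp (-a)))"
    using a b by (intro sum.cong) (auto simp: shifted)
  also have "\<dots> = (\<Sum>x\<le>m. of_nat (m choose x) * a ^ x * b ^ (m - x)) / fact m * exp (-(a + b))"
    unfolding sum_divide_distrib sum_distrib_right
  proof (intro sum.cong refl)
    fix x assume "x \<in> {..m}"
    then have binomial: "(of_nat (m choose x) :: real) = fact m / (fact x * fact (m - x))"
      by (simp add: binomial_fact)
    show "(b ^ (m - x) / fact (m - x) * exp (-b)) * (a ^ x / fact x * exp (-a))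
        = of_nat (m choose x) * a ^ x * b ^ (m - x) / fact m * exp (-(a + b))"
      unfolding binomial by (simp add: field_simps exp_add exp_diff exp_minus)
  qed
  also have "(\<Sum>x\<le>m. of_nat (m choose x) * a ^ x * b ^ (m - x)) = (a + b) ^ m"
    by (simp add: binomial_ring)
  finally show "pmf (conv_pmf (poisson_pmf a) (poisson_pmf b)) m = pmf (poisson_pmf (a + b)) m"
    using a b by simp
qed

lemma conv_list_replicate_poisson_pmf:
  assumes "c > 0" "N > 0"
  shows "conv_list_pmf (replicate N (poisson_pmf c)) = poisson_pmf (real N * c)"
  using assms(2)
proof (induction N rule: nat_induct_non_zero)
  case (Suc N)
  then show ?case using assms(1) by (simp add: conv_poisson_pmf algebra_simps)
qed simp

lemma poisson_thinning:
  assumes a: "a > 0" and q: "0 < q" "q \<le> 1"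
  shows "bind_pmf (poisson_pmf a) (\<lambda>s. binomial_pmf s q) = poisson_pmf (a * q)"
proof (rule pmf_eqI)
  fix m :: nat
  define f where "f s = real (s choose m) * q ^ m * (1 - q) ^ (s - m)" for s
  define c where "c = (a * q) ^ m / fact m * exp (-a)"
  have shifted_terms: "pmf (poisson_pmf a) (i + m) * f (i + m) = c * ((a * (1 - q)) ^ i / fact i)" for i
  proof -
    have binomial: "(of_nat ((i + m) choose m) :: real) = fact (i + m) / (fact m * fact i)"
      using binomial_fact[of m "i + m"] by simp
    show ?thesis
      using a unfolding f_def c_def binomial power_mult_distrib
      by (simp add: field_simps power_add)
  qed
  have "(\<lambda>i. pmf (poisson_pmf a) (i + m) * f (i + m)) sums (c * exp (a * (1 - q)))"
    unfolding shifted_terms by (rule sums_mult[OF real_exp_sums])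
  moreover have "(\<Sum>i<m. pmf (poisson_pmf a) i * f i) = 0"
    by (intro sum.neutral) (simp add: f_def)
  ultimately have "(\<lambda>i. pmf (poisson_pmf a) i * f i) sums (c * exp (a * (1 - q)))"
    using sums_iff_shift[of "\<lambda>i. pmf (poisson_pmf a) i * f i" m] by simp
  then have "measure_pmf.expectation (poisson_pmf a) f = c * exp (a * (1 - q))"
    using q by (intro pmf_sums_expectation(2)) (auto simp: f_def)
  then show "pmf (bind_pmf (poisson_pmf a) (\<lambda>s. binomial_pmf s q)) m = pmf (poisson_pmf (a * q)) m"
    using a q unfolding pmf_bind c_def
    by (simp add: f_def[abs_def] field_simps exp_add[symmetric] right_diff_distrib)
qed

lemma map_pmf_eq_bernoulli_pmf: "map_pmf (\<lambda>y. y = x) p = bernoulli_pmf (pmf p x)"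
proof (rule pmf_eqI)
  fix b :: bool
  have "pmf (map_pmf (\<lambda>y. y = x) p) False = measure_pmf.prob p (- {x})"
    by (simp add: pmf_map vimage_def Compl_eq)
  also have "\<dots> = 1 - pmf p x"
    using measure_pmf.prob_compl[of "{x}" p] by (simp add: Compl_eq_Diff_UNIV measure_pmf_single)
  finally show "pmf (map_pmf (\<lambda>y. y = x) p) b = pmf (bernoulli_pmf (pmf p x)) b"
    by (cases b) (simp_all add: pmf_map vimage_def measure_pmf_single pmf_le_1)
qed

lemma replicate_map_pmf: "replicate_pmf N (map_pmf f p) = map_pmf (map f) (replicate_pmf N p)"
  by (induction N) (simp_all add: map_pmf_def bind_assoc_pmf bind_return_pmf)

lemma count_list_replicate_pmf:
  "map_pmf (\<lambda>xs. count_list xs x) (replicate_pmf N p) = binomial_pmf N (pmf p x)"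
proof -
  have count_list_filter: "length (filter (\<lambda>y. y = x) xs) = count_list xs x" for xs
    by (induction xs) auto
  have "binomial_pmf N (pmf p x) = map_pmf (length \<circ> filter id) (replicate_pmf N (map_pmf (\<lambda>y. y = x) p))"
    by (subst binomial_pmf_altdef) (auto simp: pmf_le_1 map_pmf_eq_bernoulli_pmf)
  then show ?thesis
    by (simp add: replicate_map_pmf map_pmf_comp filter_map o_def count_list_filter)
qed

definition count_ones :: "nat \<Rightarrow> (nat \<times> bool) list \<Rightarrow> nat" where
  "count_ones j ms = count_list ms (j, True)"

lemma count_ones_simps [simp]:
  "count_ones j [] = 0"
  "count_ones j (m # ms) = of_bool (m = (j, True)) + count_ones j ms"
  by (simp_all add: count_ones_def)

lemma count_ones_concat: "count_ones j (concat mss) = sum_list (map (count_ones j) mss)"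
  by (induction mss) (simp_all add: count_ones_def)

lemma count_ones_noise:
  "count_ones j (map (\<lambda>b. (j', b)) bs) = (if j' = j then count_list bs True else 0)"
  by (induction bs) auto

lemma count_heads_poisson_fair_coins:
  assumes "r > 0"
  shows "bind_pmf (poisson_pmf r) (\<lambda>s. map_pmf (\<lambda>bs. count_list bs True) (replicate_pmf s (bernoulli_pmf (1/2))))
       = poisson_pmf (r / 2)"
  using poisson_thinning[OF assms, of "1/2"] by (simp add: count_list_replicate_pmf)

lemma count_ones_coord_msgs:
  assumes "r > 0"
  shows "map_pmf (count_ones j) (coord_msgs r x j')
       = (if j' = j then map_pmf (\<lambda>y. of_bool (x = j) + y) (poisson_pmf (r / 2)) else return_pmf 0)"
proof (cases "j' = j")
  case True
  then have "map_pmf (count_ones j) (coord_msgs r x j')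
      = map_pmf (\<lambda>y. of_bool (x = j) + y) (bind_pmf (poisson_pmf r)
          (\<lambda>s. map_pmf (\<lambda>bs. count_list bs True) (replicate_pmf s (bernoulli_pmf (1/2)))))"
    unfolding coord_msgs_def
    by (simp add: map_bind_pmf count_ones_noise map_pmf_comp map_pmf_def[symmetric])
  with True show ?thesis by (simp add: count_heads_poisson_fair_coins[OF assms])
qed (simp add: coord_msgs_def map_bind_pmf count_ones_noise bind_return_pmf' bind_pmf_const)

lemma count_ones_user_msgs:
  assumes "r > 0" "j \<in> {1..k}"
  shows "map_pmf (count_ones j) (user_msgs k r x) = map_pmf (\<lambda>y. of_bool (x = j) + y) (poisson_pmf (r / 2))"
proof -
  have "map_pmf (count_ones j) (user_msgs k r x)
      = conv_list_pmf (map (\<lambda>j'. map_pmf (count_ones j) (coord_msgs r x j')) [1..<Suc k])"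
    unfolding user_msgs_def by (simp add: map_pmf_comp count_ones_concat map_sum_list_seq_pmf o_def)
  also have "\<dots> = map_pmf (count_ones j) (coord_msgs r x j)"
    using assms by (intro conv_list_pmf_single) (auto simp: count_ones_coord_msgs)
  finally show ?thesis by (simp add: count_ones_coord_msgs[OF assms(1)])
qed

lemma count_ones_blanket_msgs:
  assumes "lam > 0" "j \<in> {1..k}"
  shows "map_pmf (count_ones j) (blanket_msgs k lam) = poisson_pmf (lam / 2)"
proof -
  define B :: "nat \<Rightarrow> (nat \<times> bool) list pmf" where "B j' = do {
      s \<leftarrow> poisson_pmf lam;
      bs \<leftarrow> replicate_pmf s (bernoulli_pmf (1/2));
      return_pmf (map (\<lambda>b. (j', b)) bs) }" for j'
  have "map_pmf (count_ones j) (blanket_msgs k lam)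
      = conv_list_pmf (map (\<lambda>j'. map_pmf (count_ones j) (B j')) [1..<Suc k])"
    unfolding blanket_msgs_def B_def[symmetric]
    by (simp add: map_pmf_comp count_ones_concat map_sum_list_seq_pmf o_def)
  also have "\<dots> = map_pmf (count_ones j) (B j)"
    using assms by (intro conv_list_pmf_single)
      (auto simp: B_def map_bind_pmf count_ones_noise bind_return_pmf' bind_pmf_const)
  also have "\<dots> = poisson_pmf (lam / 2)"
    unfolding B_def using count_heads_poisson_fair_coins[OF assms(1)]
    by (simp add: map_bind_pmf count_ones_noise map_pmf_def[symmetric] map_pmf_comp)
  finally show ?thesis .
qed

lemma count_ones_users_msgs:
  assumes "N > 0" "lam > 0" "j \<in> {1..k}"
  shows "map_pmf (count_ones j) (do {
             xs \<leftarrow> replicate_pmf N p;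
             mss \<leftarrow> seq_pmf (map (user_msgs k (lam / real N)) xs);
             return_pmf (concat mss) })
       = conv_pmf (binomial_pmf N (pmf p j)) (poisson_pmf (lam / 2))"
proof -
  define r where "r = lam / real N"
  have r: "r > 0" and "real N * (r / 2) = lam / 2"
    using assms by (simp_all add: r_def)
  have "map_pmf (count_ones j) (do {
             xs \<leftarrow> replicate_pmf N p;
             mss \<leftarrow> seq_pmf (map (user_msgs k r) xs);
             return_pmf (concat mss) })
      = bind_pmf (replicate_pmf N p)
          (\<lambda>xs. conv_list_pmf (map (\<lambda>x. map_pmf (\<lambda>y. of_bool (x = j) + y) (poisson_pmf (r / 2))) xs))"
    by (simp add: map_bind_pmf count_ones_concat map_pmf_def[symmetric] map_pmf_comp
        map_sum_list_seq_pmf o_def count_ones_user_msgs[OF r assms(3)])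
  also have "\<dots> = bind_pmf (replicate_pmf N p) (\<lambda>xs. map_pmf (\<lambda>y. count_list xs j + y) (poisson_pmf (lam / 2)))"
  proof (intro bind_pmf_cong refl)
    fix xs assume "xs \<in> set_pmf (replicate_pmf N p)"
    then have "length xs = N" by (simp add: set_replicate_pmf)
    moreover have "sum_list (map (\<lambda>x. of_bool (x = j)) xs) = count_list xs j"
      by (induction xs) auto
    ultimately show "conv_list_pmf (map (\<lambda>x. map_pmf (\<lambda>y. of_bool (x = j) + y) (poisson_pmf (r / 2))) xs)
        = map_pmf (\<lambda>y. count_list xs j + y) (poisson_pmf (lam / 2))"
      using assms(1) r \<open>real N * (r / 2) = lam / 2\<close>
      by (simp add: conv_list_pmf_shift conv_list_replicate_poisson_pmf)
  qed
  also have "\<dots> = conv_pmf (binomial_pmf N (pmf p j)) (poisson_pmf (lam / 2))"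
    by (simp add: conv_pmf_map_left count_list_replicate_pmf[symmetric])
  finally show ?thesis by (simp add: r_def)
qed

lemma binomial_pmf_0_trials: "q \<in> {0..1} \<Longrightarrow> binomial_pmf 0 q = return_pmf 0"
  by (simp add: set_pmf_subset_singleton[symmetric] set_pmf_binomial_eq)

lemma binomial_pmf_0_success: "binomial_pmf N 0 = return_pmf 0"
  by (simp add: set_pmf_subset_singleton[symmetric])

lemma count_protocol_poisson:
  assumes "n > 0" "lam > 0" "j \<in> {1..k}"
  shows "map_pmf (\<lambda>M. count M (j, True)) (protocol k n lam p) = poisson_pmf (n * pmf p j + lam / 2)"
proof -
  define q where "q = pmf p j"
  have q: "0 \<le> q" "q \<le> 1" by (simp_all add: q_def pmf_le_1)
  have given_N: "map_pmf (count_ones j) (if N = 0 then blanket_msgs k lam else do {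
             xs \<leftarrow> replicate_pmf N p;
             mss \<leftarrow> seq_pmf (map (user_msgs k (lam / real N)) xs);
             return_pmf (concat mss) })
        = conv_pmf (binomial_pmf N q) (poisson_pmf (lam / 2))" for N
    using assms q by (simp add: q_def count_ones_blanket_msgs count_ones_users_msgs binomial_pmf_0_trials)
  have "map_pmf (\<lambda>M. count M (j, True)) (protocol k n lam p)
      = bind_pmf (poisson_pmf n) (\<lambda>N. conv_pmf (binomial_pmf N q) (poisson_pmf (lam / 2)))"
    unfolding protocol_def given_N[symmetric]
    by (simp add: map_bind_pmf map_pmf_def[symmetric] map_pmf_comp count_mset count_ones_def[symmetric])
  also have "\<dots> = conv_pmf (bind_pmf (poisson_pmf n) (\<lambda>N. binomial_pmf N q)) (poisson_pmf (lam / 2))"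
    by (rule bind_conv_pmf_left)
  also have "\<dots> = poisson_pmf (n * q + lam / 2)"
  proof (cases "q = 0")
    case True
    then show ?thesis by (simp add: binomial_pmf_0_success bind_pmf_const)
  next
    case False
    then show ?thesis
      using assms q by (simp add: poisson_thinning conv_poisson_pmf)
  qed
  finally show ?thesis by (simp add: q_def)
qed

lemma expectation_count_protocol:
  assumes "n > 0" "lam > 0" "j \<in> {1..k}"
  shows "integrable (protocol k n lam p) (\<lambda>M. (msg_count M j - \<mu>)\<^sup>2 - msg_count M j)"
    "measure_pmf.expectation (protocol k n lam p) (\<lambda>M. (msg_count M j - \<mu>)\<^sup>2 - msg_count M j)
       = (n * pmf p j + lam / 2 - \<mu>)\<^sup>2"
proof -
  have rate: "n * pmf p j + lam / 2 > 0"
    using assms by (simp add: add_nonneg_pos)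
  note law = count_protocol_poisson[OF assms(1-3), of p, symmetric]
  show "integrable (protocol k n lam p) (\<lambda>M. (msg_count M j - \<mu>)\<^sup>2 - msg_count M j)"
    using poisson_unbiased_square(1)[OF rate, of \<mu>]
    unfolding law by (simp add: msg_count_def)
  show "measure_pmf.expectation (protocol k n lam p) (\<lambda>M. (msg_count M j - \<mu>)\<^sup>2 - msg_count M j)
      = (n * pmf p j + lam / 2 - \<mu>)\<^sup>2"
    using poisson_unbiased_square(2)[OF rate, of \<mu>]
    unfolding law by (simp add: msg_count_def)
qed

lemma expectation_stat_Z:
  assumes "k > 0" "n > 0" "lam > 0"
  shows "measure_pmf.expectation (protocol k n lam p) (stat_Z k n lam)
       = n * real k * (\<Sum>j = 1..k. (pmf p j - pmf (unif k) j)\<^sup>2)"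
proof -
  define \<mu> where "\<mu> = n / real k + lam / 2"
  note coordinate = expectation_count_protocol[OF assms(2,3), where \<mu> = \<mu>]
  have "measure_pmf.expectation (protocol k n lam p) (stat_Z k n lam)
      = real k / n * (\<Sum>j = 1..k. (n * pmf p j + lam / 2 - \<mu>)\<^sup>2)"
    unfolding stat_Z_def Let_def \<mu>_def[symmetric] by (simp add: coordinate)
  also have "\<dots> = real k / n * (\<Sum>j = 1..k. n\<^sup>2 * (pmf p j - pmf (unif k) j)\<^sup>2)"
    using assms(1) by (intro arg_cong[where f = "\<lambda>s. real k / n * s"] sum.cong refl)
      (simp add: \<mu>_def unif_def power2_eq_square algebra_simps)
  also have "\<dots> = n * real k * (\<Sum>j = 1..k. (pmf p j - pmf (unif k) j)\<^sup>2)"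
    using assms(2) by (simp add: sum_distrib_left[symmetric] power2_eq_square)
  finally show ?thesis .
qed

lemma dTV_gt_imp_sum_squares_gt:
  assumes "0 \<le> \<alpha>" "dTV k p q > \<alpha>"
  shows "4 * \<alpha>\<^sup>2 < real k * (\<Sum>j = 1..k. (pmf p j - pmf q j)\<^sup>2)"
proof -
  have "(2 * \<alpha>)\<^sup>2 < (\<Sum>j = 1..k. \<bar>pmf p j - pmf q j\<bar>)\<^sup>2"
    using assms by (intro power_strict_mono) (auto simp: dTV_def)
  also have "\<dots> \<le> (\<Sum>j = 1..k. \<bar>pmf p j - pmf q j\<bar>\<^sup>2) * real k"
    using sum_squared_le_sum_of_squares[of "\<lambda>j. \<bar>pmf p j - pmf q j\<bar>" "{1..k}"] by simp
  finally show ?thesis by (simp add: power_mult_distrib mult.commute)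
qed

theorem lemma3p3:
  fixes k :: nat and n lam \<alpha> :: real and p :: "nat pmf"
  assumes "k \<ge> 2" and "n > 0" and "lam > 0"
    and "set_pmf p \<subseteq> {1..k}"
    and "0 < \<alpha>" and "\<alpha> \<le> 1"
  shows "measure_pmf.expectation (protocol k n lam p) (stat_Z k n lam)
           = n * real k * (\<Sum>j = 1..k. (pmf p j - pmf (unif k) j)\<^sup>2)
         \<and> (p = unif k \<longrightarrow> measure_pmf.expectation (protocol k n lam p) (stat_Z k n lam) = 0)
         \<and> (dTV k p (unif k) > \<alpha> \<longrightarrow>
              measure_pmf.expectation (protocol k n lam p) (stat_Z k n lam) > 4 * n * \<alpha>\<^sup>2)"
proof -
  have E: "measure_pmf.expectation (protocol k n lam p) (stat_Z k n lam)
      = n * real k * (\<Sum>j = 1..k. (pmf p j - pmf (unif k) j)\<^sup>2)"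
    using assms(1-3) by (intro expectation_stat_Z) auto
  have "4 * n * \<alpha>\<^sup>2 < n * real k * (\<Sum>j = 1..k. (pmf p j - pmf (unif k) j)\<^sup>2)"
    if "dTV k p (unif k) > \<alpha>"
    using dTV_gt_imp_sum_squares_gt[OF _ that] assms(2,5) by (simp add: mult.assoc)
  with E show ?thesis by auto
qed

end
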